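(* Let $f:\mathcal{D}_M\to\mathbb{R}$ be continuous, where $M>0$ and $$\mathcal{D}_M=\{(t,x,y,z):\ 0\le t\le 1,\ |x|\le M_0M,\ |y|\le M_1M,\ |z|\le M_2M\},\qquad M_0=\tfrac{1}{12},\ M_1=\tfrac18,\ M_2=\tfrac12 .$$ Assume there are constants $L_0,L_1,L_2\ge 0$ such that $|f(t,x,y,z)|\le M$ for all $(t,x,y,z)\in\mathcal{D}_M$, $$|f(t,x_2,y_2,z_2)-f(t,x_1,y_1,z_1)|\le L_0|x_2-x_1|+L_1|y_2-y_1|+L_2|z_2-z_1|$$ for all $(t,x_i,y_i,z_i)\in\mathcal{D}_M$ ($i=1,2$), and $q:=L_0M_0+L_1M_1+L_2M_2<1$. Consider the iteration: $\varphi_0(t)=f(t,0,0,0)$ and, for $k=0,1,\dots$, $$u_k(t)=\int_0^1G_0(t,s)\varphi_k(s)\,ds,\quad y_k(t)=\int_0^1G_1(t,s)\varphi_k(s)\,ds,\quad z_k(t)=\int_0^1G_2(t,s)\varphi_k(s)\,ds,$$ $$\varphi_{k+1}(t)=f(t,u_k(t),y_k(t),z_k(t)),$$ and set $p_k=\dfrac{q^k}{1-q}\|\varphi_1-\varphi_0\|$, where $\|\cdot\|$ is the maximum norm on $[0,1]$. Let $u$ be the (unique) solution of the boundary value problem $$u'''(t)=f(t,u(t),u'(t),u''(t)),\ 0<t<1,\qquad u(0)=0,\ u'(0)=0,\ u'(1)=0,$$ satisfying $|u(t)|\le M_0M$, $|u'(t)|\le M_1M$, $|u''(t)|\le M_2M$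 on $[0,1]$. Then the iterative method converges and for all $k\ge 0$ $$\|u_k-u\|\le M_0p_k,\qquad \|u_k'-u'\|\le M_1p_k,\qquad \|u_k''-u''\|\le M_2p_k .$$
   Context: The kernels are $G_0(t,s)=\frac{s}{2}(t^2-2t+s)$ for $0\le s\le t\le1$ and $G_0(t,s)=\frac{t^2}{2}(s-1)$ for $0\le t\le s\le 1$; $G_1(t,s)=s(t-1)$ for $0\le s\le t\le 1$ and $G_1(t,s)=t(s-1)$ for $0\le t\le s\le 1$; $G_2(t,s)=s$ for $0\le s\le t\le 1$ and $G_2(t,s)=s-1$ for $0\le t\le s\le 1$. ($G_0$ is the Green function of $u'''=\varphi$, $u(0)=u'(0)=u'(1)=0$, and $G_1=\partial_tG_0$, $G_2=\partial_t^2G_0$.) The constants satisfy $M_n=\max_{0\le t\le 1}\int_0^1|G_n(t,s)|\,ds$ for $n=0,1,2$. Under these hypotheses the boundary value problem has exactly one solution with the stated bounds. *)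

theory Defs
  imports "HOL-Analysis.Analysis"
begin

definition G0 :: "real \<Rightarrow> real \<Rightarrow> real" where
  "G0 t s = (if s \<le> t then s / 2 * (t\<^sup>2 - 2 * t + s) else t\<^sup>2 / 2 * (s - 1))"

definition G1 :: "real \<Rightarrow> real \<Rightarrow> real" where
  "G1 t s = (if s \<le> t then s * (t - 1) else t * (s - 1))"

definition G2 :: "real \<Rightarrow> real \<Rightarrow> real" where
  "G2 t s = (if s \<le> t then s else s - 1)"

definition M0 :: real where "M0 = 1 / 12"
definition M1 :: real where "M1 = 1 / 8"
definition M2 :: real where "M2 = 1 / 2"

definition DM :: "real \<Rightarrow> (real \<times> real \<times> real \<times> real) set" where
  "DM M = {(t, x, y, z). 0 \<le> t \<and> t \<le> 1 \<and> \<bar>x\<bar> \<le> M0 * M \<and> \<bar>y\<bar> \<le> M1 * M \<and> \<bar>z\<bar> \<le> M2 * M}"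

definition intG :: "(real \<Rightarrow> real \<Rightarrow> real) \<Rightarrow> (real \<Rightarrow> real) \<Rightarrow> real \<Rightarrow> real" where
  "intG G \<phi> t = integral {0..1} (\<lambda>s. G t s * \<phi> s)"

primrec phi_it :: "(real \<Rightarrow> real \<Rightarrow> real \<Rightarrow> real \<Rightarrow> real) \<Rightarrow> nat \<Rightarrow> real \<Rightarrow> real" where
  "phi_it f 0 = (\<lambda>t. f t 0 0 0)"
| "phi_it f (Suc k) = (\<lambda>t. f t (intG G0 (phi_it f k) t) (intG G1 (phi_it f k) t) (intG G2 (phi_it f k) t))"

definition maxnorm :: "(real \<Rightarrow> real) \<Rightarrow> real" where
  "maxnorm g = Sup ((\<lambda>t. \<bar>g t\<bar>) ` {0..1})"

end

theory Submission
  imports Defs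
begin

text \<open>
  The Green functions invert the boundary value problem: a function u with u(0) = u'(0) = u'(1) = 0
  and continuous third derivative \<psi> is recovered as u = \<integral> G0 \<psi>, u' = \<integral> G1 \<psi>, u'' = \<integral> G2 \<psi>.
  Hence u solves the problem iff \<psi> = f(t, u, u', u'') is a fixed point of the map
  \<phi> \<mapsto> f(t, \<integral> G0 \<phi>, \<integral> G1 \<phi>, \<integral> G2 \<phi>). Since \<integral>|G_n(t,s)| ds \<le> M_n, this map sends the
  continuous functions bounded by M into themselves (so the arguments of f stay in D_M) and is a
  contraction with constant q for the maximum norm. The usual a priori estimate of the contraction
  principle bounds \<parallel>\<phi>_k - \<psi>\<parallel> by p_k, and the kernel bounds transfer this to the errors of
  u_k, u_k', u_k''.
\<close>

lemma has_integral_split_at: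
  fixes h h1 h2 :: "real \<Rightarrow> real"
  assumes t: "a \<le> t" "t \<le> b"
    and cont: "continuous_on {a..b} h1" "continuous_on {a..b} h2"
    and left: "\<And>s. a \<le> s \<Longrightarrow> s \<le> t \<Longrightarrow> h s = h1 s"
    and right: "\<And>s. t < s \<Longrightarrow> s \<le> b \<Longrightarrow> h s = h2 s"
  shows "(h has_integral (integral {a..t} h1 + integral {t..b} h2)) {a..b}"
proof (rule has_integral_combine[OF t])
  have "h1 integrable_on {a..t}"
    by (rule integrable_continuous_interval, rule continuous_on_subset[OF cont(1)]) (use t in auto)
  then show "(h has_integral integral {a..t} h1) {a..t}"
    by (rule has_integral_spike_finite[where S="{}", rotated 2, OF integrable_integral]) (auto simp: left)
  have "h2 integrable_on {t..b}"
    by (rule integrable_continuous_interval, rule continuous_on_subset[OF cont(2)]) (use t in auto)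
  then show "(h has_integral integral {t..b} h2) {t..b}"
    by (rule has_integral_spike_finite[where S="{t}", rotated 2, OF integrable_integral]) (auto simp: right)
qed

lemma has_integral_quadratic:
  fixes a b c0 c1 c2 :: real
  assumes "a \<le> b"
  shows "((\<lambda>s. c0 + c1 * s + c2 * s\<^sup>2) has_integral
           (c0 * (b - a) + c1 * (b\<^sup>2 - a\<^sup>2) / 2 + c2 * (b ^ 3 - a ^ 3) / 3)) {a..b}"
proof -
  let ?F = "\<lambda>s. c0 * s + c1 * s\<^sup>2 / 2 + c2 * s ^ 3 / 3"
  have "((\<lambda>s. c0 + c1 * s + c2 * s\<^sup>2) has_integral (?F b - ?F a)) {a..b}"
    by (rule fundamental_theorem_of_calculus[OF assms])
      (auto simp: has_real_derivative_iff_has_vector_derivative[symmetric] power2_eq_square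
            intro!: derivative_eq_intros)
  then show ?thesis by (rule has_integral_eq_rhs) (simp add: field_simps)
qed

definition weighted_primitive :: "(real \<Rightarrow> real) \<Rightarrow> (real \<Rightarrow> real) \<Rightarrow> real \<Rightarrow> real" where
  "weighted_primitive g \<phi> t = integral {0..t} (\<lambda>s. g s * \<phi> s)"

lemma weighted_primitive_0 [simp]: "weighted_primitive g \<phi> 0 = 0"
  by (simp add: weighted_primitive_def)

lemma integral_tail_eq_weighted_primitive:
  assumes "continuous_on {0..1} g" "continuous_on {0..1} \<phi>" "0 \<le> t" "t \<le> 1"
  shows "integral {t..1} (\<lambda>s. g s * \<phi> s) = weighted_primitive g \<phi> 1 - weighted_primitive g \<phi> t"
proof -
  have "(\<lambda>s. g s * \<phi> s) integrable_on {0..1}"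
    by (intro integrable_continuous_interval continuous_intros assms)
  from Henstock_Kurzweil_Integration.integral_combine[OF assms(3,4) this] show ?thesis
    by (simp add: weighted_primitive_def)
qed

lemma weighted_primitive_has_derivative:
  assumes "continuous_on {0..1} g" "continuous_on {0..1} \<phi>" "t \<in> {0..1}"
  shows "(weighted_primitive g \<phi> has_real_derivative g t * \<phi> t) (at t within {0..1})"
proof -
  have "continuous_on {0..1} (\<lambda>s. g s * \<phi> s)" by (intro continuous_intros assms)
  from integral_has_vector_derivative[OF this assms(3)] show ?thesis
    unfolding weighted_primitive_def has_real_derivative_iff_has_vector_derivative .
qed

lemma weighted_integrable_on_initial:
  fixes g \<phi> :: "real \<Rightarrow> real"
  assumes "continuous_on {0..1} g" "continuous_on {0..1} \<phi>" "0 \<le> t" "t \<le> 1"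
  shows "(\<lambda>s. g s * \<phi> s) integrable_on {0..t}"
proof -
  have "continuous_on {0..1} (\<lambda>s. g s * \<phi> s)" by (intro continuous_intros assms)
  then have "continuous_on {0..t} (\<lambda>s. g s * \<phi> s)" by (rule continuous_on_subset) (use assms in auto)
  then show ?thesis by (rule integrable_continuous_interval)
qed

text \<open>Splitting the kernels at s = t separates the variables; the t-derivatives of the kernel
  integrals are then computed from the weighted primitives.\<close>

lemma G0_has_integral:
  assumes c: "continuous_on {0..1} \<phi>" and t: "0 \<le> t" "t \<le> 1"
  shows "((\<lambda>s. G0 t s * \<phi> s) has_integral
           (t\<^sup>2 - 2 * t) / 2 * weighted_primitive (\<lambda>s. s) \<phi> t + weighted_primitive (\<lambda>s. s\<^sup>2 / 2) \<phi> t
           + t\<^sup>2 / 2 * (weighted_primitive (\<lambda>s. s - 1) \<phi> 1 - weighted_primitive (\<lambda>s. s - 1) \<phi> t)) {0..1}"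
proof -
  let ?h1 = "\<lambda>s. (t\<^sup>2 - 2 * t) / 2 * (s * \<phi> s) + s\<^sup>2 / 2 * \<phi> s"
  have split: "((\<lambda>s. G0 t s * \<phi> s) has_integral
          (integral {0..t} ?h1 + integral {t..1} (\<lambda>s. t\<^sup>2 / 2 * ((s - 1) * \<phi> s)))) {0..1}"
    by (rule has_integral_split_at[OF t])
      (auto intro!: continuous_intros c simp: G0_def field_simps power2_eq_square)
  have "integral {0..t} ?h1 =
      integral {0..t} (\<lambda>s. (t\<^sup>2 - 2 * t) / 2 * (s * \<phi> s)) + integral {0..t} (\<lambda>s. s\<^sup>2 / 2 * \<phi> s)"
    by (intro integral_add integrable_on_mult_right weighted_integrable_on_initial c t continuous_intros) auto
  also have "\<dots> =
      (t\<^sup>2 - 2 * t) / 2 * weighted_primitive (\<lambda>s. s) \<phi> t + weighted_primitive (\<lambda>s. s\<^sup>2 / 2) \<phi> t"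
    by (simp only: integral_mult_right weighted_primitive_def)
  finally have initial: "integral {0..t} ?h1 = \<dots>" .
  have tail: "integral {t..1} (\<lambda>s. t\<^sup>2 / 2 * ((s - 1) * \<phi> s)) =
      t\<^sup>2 / 2 * (weighted_primitive (\<lambda>s. s - 1) \<phi> 1 - weighted_primitive (\<lambda>s. s - 1) \<phi> t)"
    using integral_tail_eq_weighted_primitive[OF _ c t, of "\<lambda>s. s - 1"] by (simp add: continuous_intros)
  show ?thesis using split unfolding initial tail .
qed

lemma G1_has_integral:
  assumes c: "continuous_on {0..1} \<phi>" and t: "0 \<le> t" "t \<le> 1"
  shows "((\<lambda>s. G1 t s * \<phi> s) has_integral
           (t - 1) * weighted_primitive (\<lambda>s. s) \<phi> t
           + t * (weighted_primitive (\<lambda>s. s - 1) \<phi> 1 - weighted_primitive (\<lambda>s. s - 1) \<phi> t)) {0..1}"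
proof -
  have "((\<lambda>s. G1 t s * \<phi> s) has_integral
          (integral {0..t} (\<lambda>s. (t - 1) * (s * \<phi> s)) + integral {t..1} (\<lambda>s. t * ((s - 1) * \<phi> s)))) {0..1}"
    by (rule has_integral_split_at[OF t]) (auto intro!: continuous_intros c simp: G1_def)
  moreover have "integral {t..1} (\<lambda>s. t * ((s - 1) * \<phi> s)) =
      t * (weighted_primitive (\<lambda>s. s - 1) \<phi> 1 - weighted_primitive (\<lambda>s. s - 1) \<phi> t)"
    using integral_tail_eq_weighted_primitive[OF _ c t, of "\<lambda>s. s - 1"] by (simp add: continuous_intros)
  ultimately show ?thesis by (simp only: integral_mult_right weighted_primitive_def)
qed

lemma G2_has_integral:
  assumes c: "continuous_on {0..1} \<phi>" and t: "0 \<le> t" "t \<le> 1"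
  shows "((\<lambda>s. G2 t s * \<phi> s) has_integral
           weighted_primitive (\<lambda>s. s) \<phi> t
           + (weighted_primitive (\<lambda>s. s - 1) \<phi> 1 - weighted_primitive (\<lambda>s. s - 1) \<phi> t)) {0..1}"
proof -
  have "((\<lambda>s. G2 t s * \<phi> s) has_integral
          (integral {0..t} (\<lambda>s. s * \<phi> s) + integral {t..1} (\<lambda>s. (s - 1) * \<phi> s))) {0..1}"
    by (rule has_integral_split_at[OF t]) (auto intro!: continuous_intros c simp: G2_def)
  moreover have "integral {t..1} (\<lambda>s. (s - 1) * \<phi> s) =
      weighted_primitive (\<lambda>s. s - 1) \<phi> 1 - weighted_primitive (\<lambda>s. s - 1) \<phi> t"
    using integral_tail_eq_weighted_primitive[OF _ c t, of "\<lambda>s. s - 1"] by (simp add: continuous_intros)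
  ultimately show ?thesis by (simp only: integral_mult_right weighted_primitive_def)
qed

lemmas intG_G0_eq = G0_has_integral[THEN integral_unique, folded intG_def]
lemmas intG_G1_eq = G1_has_integral[THEN integral_unique, folded intG_def]
lemmas intG_G2_eq = G2_has_integral[THEN integral_unique, folded intG_def]

lemma intG_boundary_values:
  assumes "continuous_on {0..1} \<phi>"
  shows "intG G0 \<phi> 0 = 0" "intG G1 \<phi> 0 = 0" "intG G1 \<phi> 1 = 0"
  using intG_G0_eq[OF assms, of 0] intG_G1_eq[OF assms, of 0] intG_G1_eq[OF assms, of 1] by simp_all

lemma intG_G0_has_derivative:
  assumes c: "continuous_on {0..1} \<phi>" and t: "t \<in> {0..1}"
  shows "(intG G0 \<phi> has_real_derivative intG G1 \<phi> t) (at t within {0..1})"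
proof (rule has_field_derivative_transform_within[where d=1])
  show "((\<lambda>t. (t\<^sup>2 - 2 * t) / 2 * weighted_primitive (\<lambda>s. s) \<phi> t + weighted_primitive (\<lambda>s. s\<^sup>2 / 2) \<phi> t
          + t\<^sup>2 / 2 * (weighted_primitive (\<lambda>s. s - 1) \<phi> 1 - weighted_primitive (\<lambda>s. s - 1) \<phi> t))
        has_real_derivative intG G1 \<phi> t) (at t within {0..1})"
    using t by (auto intro!: derivative_eq_intros weighted_primitive_has_derivative[OF _ c t] continuous_intros
        simp: intG_G1_eq[OF c] field_simps power2_eq_square)
qed (use t intG_G0_eq[OF c] in auto)

lemma intG_G1_has_derivative:
  assumes c: "continuous_on {0..1} \<phi>" and t: "t \<in> {0..1}"
  shows "(intG G1 \<phi> has_real_derivative intG G2 \<phi> t) (at t within {0..1})"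
proof (rule has_field_derivative_transform_within[where d=1])
  show "((\<lambda>t. (t - 1) * weighted_primitive (\<lambda>s. s) \<phi> t
          + t * (weighted_primitive (\<lambda>s. s - 1) \<phi> 1 - weighted_primitive (\<lambda>s. s - 1) \<phi> t))
        has_real_derivative intG G2 \<phi> t) (at t within {0..1})"
    using t by (auto intro!: derivative_eq_intros weighted_primitive_has_derivative[OF _ c t] continuous_intros
        simp: intG_G2_eq[OF c] field_simps)
qed (use t intG_G1_eq[OF c] in auto)

lemma intG_G2_has_derivative:
  assumes c: "continuous_on {0..1} \<phi>" and t: "t \<in> {0..1}"
  shows "(intG G2 \<phi> has_real_derivative \<phi> t) (at t within {0..1})"
proof (rule has_field_derivative_transform_within[where d=1])
  show "((\<lambda>t. weighted_primitive (\<lambda>s. s) \<phi> t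
          + (weighted_primitive (\<lambda>s. s - 1) \<phi> 1 - weighted_primitive (\<lambda>s. s - 1) \<phi> t))
        has_real_derivative \<phi> t) (at t within {0..1})"
    by (auto intro!: derivative_eq_intros weighted_primitive_has_derivative[OF _ c t] continuous_intros
        simp: field_simps)
qed (use t intG_G2_eq[OF c] in auto)

lemma continuous_on_derivative_within:
  fixes f :: "real \<Rightarrow> real"
  assumes "\<And>t. t \<in> S \<Longrightarrow> (f has_real_derivative f' t) (at t within S)"
  shows "continuous_on S f"
  unfolding continuous_on_eq_continuous_within using assms DERIV_continuous by blast

lemma continuous_on_intG:
  assumes "continuous_on {0..1} \<phi>"
  shows "continuous_on {0..1} (intG G0 \<phi>)" "continuous_on {0..1} (intG G1 \<phi>)"
    "continuous_on {0..1} (intG G2 \<phi>)"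
  using intG_G0_has_derivative intG_G1_has_derivative intG_G2_has_derivative assms
  by (blast intro: continuous_on_derivative_within)+

lemma abs_intG_le:
  fixes G :: "real \<Rightarrow> real \<Rightarrow> real"
  assumes "(\<lambda>s. G t s * \<phi> s) integrable_on {0..1}"
    and "((\<lambda>s. \<bar>G t s\<bar>) has_integral V) {0..1}"
    and "\<And>s. s \<in> {0..1} \<Longrightarrow> \<bar>\<phi> s\<bar> \<le> d"
  shows "\<bar>intG G \<phi> t\<bar> \<le> V * d"
proof -
  have "norm (integral {0..1} (\<lambda>s. G t s * \<phi> s)) \<le> integral {0..1} (\<lambda>s. \<bar>G t s\<bar> * d)"
    by (rule integral_norm_bound_integral[OF assms(1) has_integral_integrable[OF has_integral_mult_left[OF assms(2)]]])
      (use assms(3) in \<open>auto simp: abs_mult intro: mult_left_mono\<close>)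
  also have "\<dots> = V * d" by (rule integral_unique[OF has_integral_mult_left[OF assms(2)]])
  finally show ?thesis by (simp add: intG_def)
qed

lemma G0_abs_has_integral:
  assumes t: "0 \<le> t" "t \<le> 1"
  shows "((\<lambda>s. \<bar>G0 t s\<bar>) has_integral (t\<^sup>2 / 4 - t ^ 3 / 6)) {0..1}"
proof -
  let ?h1 = "\<lambda>s. 0 + (2 * t - t\<^sup>2) / 2 * s + (- 1 / 2) * s\<^sup>2"
  let ?h2 = "\<lambda>s. t\<^sup>2 / 2 + (- t\<^sup>2 / 2) * s + 0 * s\<^sup>2"
  let ?I1 = "0 * (t - 0) + (2 * t - t\<^sup>2) / 2 * (t\<^sup>2 - 0\<^sup>2) / 2 + (- 1 / 2) * (t ^ 3 - 0 ^ 3) / 3"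
  let ?I2 = "t\<^sup>2 / 2 * (1 - t) + (- t\<^sup>2 / 2) * (1\<^sup>2 - t\<^sup>2) / 2 + 0 * (1 ^ 3 - t ^ 3) / 3"
  have left: "\<bar>G0 t s\<bar> = ?h1 s" if "0 \<le> s" "s \<le> t" for s
  proof -
    have "t\<^sup>2 - 2 * t + s \<le> 0"
      using that t mult_left_le_one_le[of t t] by (simp add: power2_eq_square)
    then have "G0 t s \<le> 0" using that by (simp add: G0_def mult_nonneg_nonpos)
    then show ?thesis using that by (simp add: abs_of_nonpos) (simp add: G0_def field_simps power2_eq_square)
  qed
  have right: "\<bar>G0 t s\<bar> = ?h2 s" if "t < s" "s \<le> 1" for s
  proof -
    have "G0 t s \<le> 0" using that by (simp add: G0_def mult_nonneg_nonpos)
    then show ?thesis using that by (simp add: abs_of_nonpos) (simp add: G0_def field_simps power2_eq_square)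
  qed
  have split: "((\<lambda>s. \<bar>G0 t s\<bar>) has_integral (integral {0..t} ?h1 + integral {t..1} ?h2)) {0..1}"
    by (rule has_integral_split_at[OF t]) (auto intro!: continuous_intros simp: left right)
  have initial: "integral {0..t} ?h1 = ?I1"
    by (rule integral_unique[OF has_integral_quadratic]) (use t in simp)
  have tail: "integral {t..1} ?h2 = ?I2"
    by (rule integral_unique[OF has_integral_quadratic]) (use t in simp)
  from split have "((\<lambda>s. \<bar>G0 t s\<bar>) has_integral (?I1 + ?I2)) {0..1}" unfolding initial tail .
  then show ?thesis by (rule has_integral_eq_rhs) (simp add: field_simps power2_eq_square power3_eq_cube)
qed

lemma G1_abs_has_integral:
  assumes t: "0 \<le> t" "t \<le> 1"
  shows "((\<lambda>s. \<bar>G1 t s\<bar>) has_integral (t * (1 - t) / 2)) {0..1}"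
proof -
  let ?h1 = "\<lambda>s. 0 + (1 - t) * s + 0 * s\<^sup>2"
  let ?h2 = "\<lambda>s. t + (- t) * s + 0 * s\<^sup>2"
  let ?I1 = "0 * (t - 0) + (1 - t) * (t\<^sup>2 - 0\<^sup>2) / 2 + 0 * (t ^ 3 - 0 ^ 3) / 3"
  let ?I2 = "t * (1 - t) + (- t) * (1\<^sup>2 - t\<^sup>2) / 2 + 0 * (1 ^ 3 - t ^ 3) / 3"
  have left: "\<bar>G1 t s\<bar> = ?h1 s" if "0 \<le> s" "s \<le> t" for s
  proof -
    have "G1 t s \<le> 0" using that t by (simp add: G1_def mult_nonneg_nonpos)
    then show ?thesis using that by (simp add: abs_of_nonpos) (simp add: G1_def algebra_simps)
  qed
  have right: "\<bar>G1 t s\<bar> = ?h2 s" if "t < s" "s \<le> 1" for s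
  proof -
    have "G1 t s \<le> 0" using that t by (simp add: G1_def mult_nonneg_nonpos)
    then show ?thesis using that by (simp add: abs_of_nonpos) (simp add: G1_def algebra_simps)
  qed
  have split: "((\<lambda>s. \<bar>G1 t s\<bar>) has_integral (integral {0..t} ?h1 + integral {t..1} ?h2)) {0..1}"
    by (rule has_integral_split_at[OF t]) (auto intro!: continuous_intros simp: left right)
  have initial: "integral {0..t} ?h1 = ?I1"
    by (rule integral_unique[OF has_integral_quadratic]) (use t in simp)
  have tail: "integral {t..1} ?h2 = ?I2"
    by (rule integral_unique[OF has_integral_quadratic]) (use t in simp)
  from split have "((\<lambda>s. \<bar>G1 t s\<bar>) has_integral (?I1 + ?I2)) {0..1}" unfolding initial tail .
  then show ?thesis by (rule has_integral_eq_rhs) (simp add: field_simps power2_eq_square power3_eq_cube)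
qed

lemma G2_abs_has_integral:
  assumes t: "0 \<le> t" "t \<le> 1"
  shows "((\<lambda>s. \<bar>G2 t s\<bar>) has_integral (t\<^sup>2 / 2 + (1 - t)\<^sup>2 / 2)) {0..1}"
proof -
  let ?h1 = "\<lambda>s. 0 + 1 * s + 0 * s\<^sup>2"
  let ?h2 = "\<lambda>s. 1 + (- 1) * s + 0 * s\<^sup>2"
  let ?I1 = "0 * (t - 0) + 1 * (t\<^sup>2 - 0\<^sup>2) / 2 + 0 * (t ^ 3 - 0 ^ 3) / 3"
  let ?I2 = "1 * (1 - t) + (- 1) * (1\<^sup>2 - t\<^sup>2) / 2 + 0 * (1 ^ 3 - t ^ 3) / 3"
  have left: "\<bar>G2 t s\<bar> = ?h1 s" if "0 \<le> s" "s \<le> t" for s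
    using that by (simp add: G2_def)
  have right: "\<bar>G2 t s\<bar> = ?h2 s" if "t < s" "s \<le> 1" for s
    using that by (simp add: G2_def)
  have split: "((\<lambda>s. \<bar>G2 t s\<bar>) has_integral (integral {0..t} ?h1 + integral {t..1} ?h2)) {0..1}"
    by (rule has_integral_split_at[OF t]) (auto intro!: continuous_intros simp: left right)
  have initial: "integral {0..t} ?h1 = ?I1"
    by (rule integral_unique[OF has_integral_quadratic]) (use t in simp)
  have tail: "integral {t..1} ?h2 = ?I2"
    by (rule integral_unique[OF has_integral_quadratic]) (use t in simp)
  from split have "((\<lambda>s. \<bar>G2 t s\<bar>) has_integral (?I1 + ?I2)) {0..1}" unfolding initial tail .
  then show ?thesis by (rule has_integral_eq_rhs) (simp add: field_simps power2_eq_square power3_eq_cube)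
qed

lemma abs_intG_G0_le:
  assumes "continuous_on {0..1} \<phi>" "t \<in> {0..1}" "\<And>s. s \<in> {0..1} \<Longrightarrow> \<bar>\<phi> s\<bar> \<le> d"
  shows "\<bar>intG G0 \<phi> t\<bar> \<le> M0 * d"
proof -
  have t: "0 \<le> t" "t \<le> 1" using assms(2) by auto
  have "\<bar>intG G0 \<phi> t\<bar> \<le> (t\<^sup>2 / 4 - t ^ 3 / 6) * d"
    by (rule abs_intG_le[where G=G0 and t=t, OF has_integral_integrable[OF G0_has_integral[OF assms(1) t]]
          G0_abs_has_integral[OF t] assms(3)])
  also have "\<dots> \<le> M0 * d"
  proof (rule mult_right_mono)
    have "0 \<le> (1 - t)\<^sup>2 * (1 + 2 * t)" using t by simp
    then show "t\<^sup>2 / 4 - t ^ 3 / 6 \<le> M0" by (simp add: M0_def field_simps power2_eq_square power3_eq_cube)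
    show "0 \<le> d" using assms(3)[of 0] by simp
  qed
  finally show ?thesis .
qed

lemma abs_intG_G1_le:
  assumes "continuous_on {0..1} \<phi>" "t \<in> {0..1}" "\<And>s. s \<in> {0..1} \<Longrightarrow> \<bar>\<phi> s\<bar> \<le> d"
  shows "\<bar>intG G1 \<phi> t\<bar> \<le> M1 * d"
proof -
  have t: "0 \<le> t" "t \<le> 1" using assms(2) by auto
  have "\<bar>intG G1 \<phi> t\<bar> \<le> (t * (1 - t) / 2) * d"
    by (rule abs_intG_le[where G=G1 and t=t, OF has_integral_integrable[OF G1_has_integral[OF assms(1) t]]
          G1_abs_has_integral[OF t] assms(3)])
  also have "\<dots> \<le> M1 * d"
  proof (rule mult_right_mono)
    have "0 \<le> (1 - 2 * t)\<^sup>2" by simp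
    then show "t * (1 - t) / 2 \<le> M1" by (simp add: M1_def field_simps power2_eq_square)
    show "0 \<le> d" using assms(3)[of 0] by simp
  qed
  finally show ?thesis .
qed

lemma abs_intG_G2_le:
  assumes "continuous_on {0..1} \<phi>" "t \<in> {0..1}" "\<And>s. s \<in> {0..1} \<Longrightarrow> \<bar>\<phi> s\<bar> \<le> d"
  shows "\<bar>intG G2 \<phi> t\<bar> \<le> M2 * d"
proof -
  have t: "0 \<le> t" "t \<le> 1" using assms(2) by auto
  have "\<bar>intG G2 \<phi> t\<bar> \<le> (t\<^sup>2 / 2 + (1 - t)\<^sup>2 / 2) * d"
    by (rule abs_intG_le[where G=G2 and t=t, OF has_integral_integrable[OF G2_has_integral[OF assms(1) t]]
          G2_abs_has_integral[OF t] assms(3)])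
  also have "\<dots> \<le> M2 * d"
  proof (rule mult_right_mono)
    have "0 \<le> t * (1 - t)" using t by simp
    then show "t\<^sup>2 / 2 + (1 - t)\<^sup>2 / 2 \<le> M2" by (simp add: M2_def field_simps power2_eq_square)
    show "0 \<le> d" using assms(3)[of 0] by simp
  qed
  finally show ?thesis .
qed

lemma intG_diff:
  fixes G :: "real \<Rightarrow> real \<Rightarrow> real"
  assumes "(\<lambda>s. G t s * \<phi> s) integrable_on {0..1}" "(\<lambda>s. G t s * \<psi> s) integrable_on {0..1}"
  shows "intG G \<phi> t - intG G \<psi> t = intG G (\<lambda>s. \<phi> s - \<psi> s) t"
  using integral_diff[OF assms] by (simp add: intG_def right_diff_distrib)

lemma intG_kernels_diff:
  assumes "continuous_on {0..1} \<phi>" "continuous_on {0..1} \<psi>" "t \<in> {0..1}"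
  shows "intG G0 \<phi> t - intG G0 \<psi> t = intG G0 (\<lambda>s. \<phi> s - \<psi> s) t"
    and "intG G1 \<phi> t - intG G1 \<psi> t = intG G1 (\<lambda>s. \<phi> s - \<psi> s) t"
    and "intG G2 \<phi> t - intG G2 \<psi> t = intG G2 (\<lambda>s. \<phi> s - \<psi> s) t"
  using assms
  by (auto intro!: intG_diff has_integral_integrable[OF G0_has_integral]
      has_integral_integrable[OF G1_has_integral] has_integral_integrable[OF G2_has_integral])

lemma diff_eq_if_same_derivative:
  fixes F G D :: "real \<Rightarrow> real"
  assumes "continuous_on {a..b} F" "continuous_on {a..b} G"
    and "\<And>x. a < x \<Longrightarrow> x < b \<Longrightarrow> (F has_real_derivative D x) (at x)"
    and "\<And>x. a < x \<Longrightarrow> x < b \<Longrightarrow> (G has_real_derivative D x) (at x)"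
    and "a \<le> t" "t \<le> b"
  shows "F t - G t = F a - G a"
proof (cases "a < b")
  case True
  show ?thesis
  proof (rule DERIV_isconst2[OF True _ _ assms(5,6)])
    show "continuous_on {a..b} (\<lambda>t. F t - G t)" by (intro continuous_intros assms(1,2))
    show "((\<lambda>t. F t - G t) has_real_derivative 0) (at x)" if "a < x" "x < b" for x
      using DERIV_diff[OF assms(3,4)[OF that]] by simp
  qed
next
  case False
  then have "t = a" using assms(5,6) by linarith
  then show ?thesis by simp
qed

lemma green_representation_derivatives:
  fixes u1 u2 \<psi> :: "real \<Rightarrow> real"
  assumes \<psi>: "continuous_on {0..1} \<psi>"
    and d2: "\<And>t. t \<in> {0..1} \<Longrightarrow> (u1 has_real_derivative u2 t) (at t within {0..1})"
    and c2: "continuous_on {0..1} u2"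
    and d3: "\<And>t. t \<in> {0<..<1} \<Longrightarrow> (u2 has_real_derivative \<psi> t) (at t)"
    and bc: "u1 0 = 0" "u1 1 = 0"
    and t: "t \<in> {0..1}"
  shows "u1 t = intG G1 \<psi> t \<and> u2 t = intG G2 \<psi> t"
proof -
  have at_interior: "at x within {0..1} = at x" if "0 < x" "x < 1" for x :: real
    using that by (rule at_within_Icc_at)
  note [simp] = intG_boundary_values[OF \<psi>]
  \<comment> \<open>u'' - \<integral>G2 \<psi> is a constant c, and u' - \<integral>G1 \<psi> - c t vanishes at both ends, forcing c = 0.\<close>
  define c where "c = u2 0 - intG G2 \<psi> 0"
  have u2_eq: "u2 s = intG G2 \<psi> s + c" if "s \<in> {0..1}" for s
  proof -
    have "(intG G2 \<psi> has_real_derivative \<psi> x) (at x)" if "0 < x" "x < 1" for x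
      using intG_G2_has_derivative[OF \<psi>, of x] that by (simp add: at_interior)
    then show ?thesis
      using diff_eq_if_same_derivative[OF c2 continuous_on_intG(3)[OF \<psi>] d3, of s] that
      by (simp add: c_def)
  qed
  have u1_eq: "u1 s - (intG G1 \<psi> s + c * s) = 0" if "s \<in> {0..1}" for s
  proof (rule trans[OF diff_eq_if_same_derivative[of 0 1 u1 _ u2 s]])
    show "continuous_on {0..1} u1" by (rule continuous_on_derivative_within[OF d2])
    show "continuous_on {0..1} (\<lambda>s. intG G1 \<psi> s + c * s)"
      by (intro continuous_intros continuous_on_intG[OF \<psi>])
    show "(u1 has_real_derivative u2 x) (at x)" if "0 < x" "x < 1" for x
      using d2[of x] that by (simp add: at_interior)
    show "((\<lambda>s. intG G1 \<psi> s + c * s) has_real_derivative u2 x) (at x)" if "0 < x" "x < 1" for x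
      using intG_G1_has_derivative[OF \<psi>, of x] u2_eq[of x] that
      by (auto intro!: derivative_eq_intros simp: at_interior)
  qed (use that bc in auto)
  have "c = 0" using u1_eq[of 1] bc by simp
  then show ?thesis using u1_eq[OF t] u2_eq[OF t] by simp
qed

lemma green_representation:
  fixes u u1 u2 \<psi> :: "real \<Rightarrow> real"
  assumes \<psi>: "continuous_on {0..1} \<psi>"
    and d1: "\<And>t. t \<in> {0..1} \<Longrightarrow> (u has_real_derivative u1 t) (at t within {0..1})"
    and d2: "\<And>t. t \<in> {0..1} \<Longrightarrow> (u1 has_real_derivative u2 t) (at t within {0..1})"
    and c2: "continuous_on {0..1} u2"
    and d3: "\<And>t. t \<in> {0<..<1} \<Longrightarrow> (u2 has_real_derivative \<psi> t) (at t)"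
    and bc: "u 0 = 0" "u1 0 = 0" "u1 1 = 0"
    and t: "t \<in> {0..1}"
  shows "u t = intG G0 \<psi> t \<and> u1 t = intG G1 \<psi> t \<and> u2 t = intG G2 \<psi> t"
proof -
  have u1_u2_eq: "u1 s = intG G1 \<psi> s \<and> u2 s = intG G2 \<psi> s" if "s \<in> {0..1}" for s
    using \<psi> d2 c2 d3 bc(2,3) that by (rule green_representation_derivatives)
  have "u t - intG G0 \<psi> t = u 0 - intG G0 \<psi> 0"
  proof (rule diff_eq_if_same_derivative[where D=u1])
    show "continuous_on {0..1} u" by (rule continuous_on_derivative_within[OF d1])
    show "continuous_on {0..1} (intG G0 \<psi>)" by (rule continuous_on_intG(1)[OF \<psi>])
    show "(u has_real_derivative u1 x) (at x)" if "0 < x" "x < 1" for x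
      using d1[of x] that by (simp add: at_within_Icc_at)
    show "(intG G0 \<psi> has_real_derivative u1 x) (at x)" if "0 < x" "x < 1" for x
      using intG_G0_has_derivative[OF \<psi>, of x] u1_u2_eq[of x] that by (simp add: at_within_Icc_at)
  qed (use t in auto)
  then show ?thesis using u1_u2_eq[OF t] bc intG_boundary_values[OF \<psi>] by simp
qed

lemma abs_le_maxnorm:
  assumes "continuous_on {0..1} g" "t \<in> {0..1}"
  shows "\<bar>g t\<bar> \<le> maxnorm g"
proof -
  have "compact ((\<lambda>t. \<bar>g t\<bar>) ` {0..1})"
    by (rule compact_continuous_image) (auto intro!: continuous_intros assms)
  then have "bdd_above ((\<lambda>t. \<bar>g t\<bar>) ` {0..1})"
    by (intro bounded_imp_bdd_above compact_imp_bounded)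
  then show ?thesis unfolding maxnorm_def by (rule cSup_upper[rotated]) (use assms in auto)
qed

lemma maxnorm_le:
  assumes "\<And>t. t \<in> {0..1} \<Longrightarrow> \<bar>g t\<bar> \<le> d"
  shows "maxnorm g \<le> d"
  unfolding maxnorm_def by (rule cSup_least) (use assms in auto)

lemma uniform_limit_if_dist_le:
  fixes F :: "nat \<Rightarrow> 'a \<Rightarrow> 'b::metric_space"
  assumes "\<And>k x. x \<in> S \<Longrightarrow> dist (F k x) (g x) \<le> b k" and "b \<longlonglongrightarrow> 0"
  shows "uniform_limit S F g sequentially"
proof (rule uniform_limitI)
  fix e :: real
  assume "e > 0"
  with assms(2) have "\<forall>\<^sub>F k in sequentially. b k < e" by (rule order_tendstoD)
  then show "\<forall>\<^sub>F k in sequentially. \<forall>x\<in>S. dist (F k x) (g x) < e"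
    by eventually_elim (use assms(1) in \<open>blast intro: le_less_trans\<close>)
qed

definition iter_map :: "(real \<Rightarrow> real \<Rightarrow> real \<Rightarrow> real \<Rightarrow> real) \<Rightarrow> (real \<Rightarrow> real) \<Rightarrow> real \<Rightarrow> real" where
  "iter_map f \<phi> t = f t (intG G0 \<phi> t) (intG G1 \<phi> t) (intG G2 \<phi> t)"

lemma phi_it_Suc_eq_iter_map: "phi_it f (Suc k) = iter_map f (phi_it f k)"
  by (simp add: iter_map_def fun_eq_iff)

definition admissible :: "real \<Rightarrow> (real \<Rightarrow> real) \<Rightarrow> bool" where
  "admissible M \<phi> \<longleftrightarrow> continuous_on {0..1} \<phi> \<and> (\<forall>t\<in>{0..1}. \<bar>\<phi> t\<bar> \<le> M)"

locale green_iteration =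
  fixes f :: "real \<Rightarrow> real \<Rightarrow> real \<Rightarrow> real \<Rightarrow> real" and M L0 L1 L2 :: real
  assumes M_nonneg: "0 \<le> M"
    and f_cont: "continuous_on (DM M) (\<lambda>(t, x, y, z). f t x y z)"
    and L_nonneg: "0 \<le> L0" "0 \<le> L1" "0 \<le> L2"
    and f_bound: "\<And>t x y z. (t, x, y, z) \<in> DM M \<Longrightarrow> \<bar>f t x y z\<bar> \<le> M"
    and f_lip: "\<And>t x1 y1 z1 x2 y2 z2. (t, x1, y1, z1) \<in> DM M \<Longrightarrow> (t, x2, y2, z2) \<in> DM M \<Longrightarrow>
        \<bar>f t x2 y2 z2 - f t x1 y1 z1\<bar> \<le> L0 * \<bar>x2 - x1\<bar> + L1 * \<bar>y2 - y1\<bar> + L2 * \<bar>z2 - z1\<bar>"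
    and q_lt_1: "L0 * M0 + L1 * M1 + L2 * M2 < 1"
begin

abbreviation q :: real where
  "q \<equiv> L0 * M0 + L1 * M1 + L2 * M2"

abbreviation error_bound :: "nat \<Rightarrow> real" where
  "error_bound k \<equiv> q ^ k / (1 - q) * maxnorm (\<lambda>t. phi_it f 1 t - phi_it f 0 t)"

lemma q_nonneg: "0 \<le> q"
  using L_nonneg by (simp add: M0_def M1_def M2_def)

lemma admissible_f_comp:
  assumes "continuous_on {0..1} a" "continuous_on {0..1} b" "continuous_on {0..1} c"
    and "\<And>t. t \<in> {0..1} \<Longrightarrow> (t, a t, b t, c t) \<in> DM M"
  shows "admissible M (\<lambda>t. f t (a t) (b t) (c t))"
proof -
  have "continuous_on {0..1} (\<lambda>t. (\<lambda>(t, x, y, z). f t x y z) (t, a t, b t, c t))"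
    by (rule continuous_on_compose2[OF f_cont]) (auto intro!: continuous_intros assms)
  then show ?thesis using f_bound assms(4) by (simp add: admissible_def)
qed

lemma intG_in_DM:
  assumes "admissible M \<phi>" "t \<in> {0..1}"
  shows "(t, intG G0 \<phi> t, intG G1 \<phi> t, intG G2 \<phi> t) \<in> DM M"
  using assms abs_intG_G0_le[of \<phi> t M] abs_intG_G1_le[of \<phi> t M] abs_intG_G2_le[of \<phi> t M]
  by (auto simp: admissible_def DM_def)

lemma admissible_iter_map:
  assumes "admissible M \<phi>"
  shows "admissible M (iter_map f \<phi>)"
proof -
  have "continuous_on {0..1} \<phi>" using assms by (simp add: admissible_def)
  from admissible_f_comp[OF continuous_on_intG[OF this] intG_in_DM[OF assms]] show ?thesis
    by (simp add: iter_map_def[abs_def])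
qed

lemma admissible_phi_it: "admissible M (phi_it f k)"
proof (induction k)
  case 0
  have "(t, 0, 0, 0) \<in> DM M" if "t \<in> {0..1}" for t
    using that M_nonneg by (simp add: DM_def M0_def M1_def M2_def)
  then show ?case using admissible_f_comp[of "\<lambda>_. 0" "\<lambda>_. 0" "\<lambda>_. 0"] by simp
next
  case (Suc k)
  then show ?case by (simp only: phi_it_Suc_eq_iter_map admissible_iter_map)
qed

lemma iter_map_contraction:
  assumes \<phi>: "admissible M \<phi>" and \<psi>: "admissible M \<psi>" and t: "t \<in> {0..1}"
    and d: "\<And>s. s \<in> {0..1} \<Longrightarrow> \<bar>\<phi> s - \<psi> s\<bar> \<le> d"
  shows "\<bar>iter_map f \<phi> t - iter_map f \<psi> t\<bar> \<le> q * d"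
proof -
  have c: "continuous_on {0..1} \<phi>" "continuous_on {0..1} \<psi>" using \<phi> \<psi> by (auto simp: admissible_def)
  then have cd: "continuous_on {0..1} (\<lambda>s. \<phi> s - \<psi> s)" by (intro continuous_intros)
  have "\<bar>iter_map f \<phi> t - iter_map f \<psi> t\<bar> \<le> L0 * \<bar>intG G0 \<phi> t - intG G0 \<psi> t\<bar>
      + L1 * \<bar>intG G1 \<phi> t - intG G1 \<psi> t\<bar> + L2 * \<bar>intG G2 \<phi> t - intG G2 \<psi> t\<bar>"
    unfolding iter_map_def by (rule f_lip[OF intG_in_DM[OF \<psi> t] intG_in_DM[OF \<phi> t]])
  also have "\<dots> \<le> L0 * (M0 * d) + L1 * (M1 * d) + L2 * (M2 * d)"
    unfolding intG_kernels_diff[OF c t]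
    by (intro add_mono mult_left_mono abs_intG_G0_le abs_intG_G1_le abs_intG_G2_le cd t d L_nonneg)
  also have "\<dots> = q * d" by (simp add: algebra_simps)
  finally show ?thesis .
qed

lemma phi_it_geometric_error:
  assumes \<psi>: "admissible M \<psi>" and fixed: "\<And>t. t \<in> {0..1} \<Longrightarrow> iter_map f \<psi> t = \<psi> t"
    and t: "t \<in> {0..1}"
  shows "\<bar>phi_it f k t - \<psi> t\<bar> \<le> q ^ k * maxnorm (\<lambda>t. phi_it f 0 t - \<psi> t)"
  using t
proof (induction k arbitrary: t)
  case 0
  have "continuous_on {0..1} (\<lambda>t. phi_it f 0 t - \<psi> t)"
    using admissible_phi_it[of 0] \<psi> by (auto simp: admissible_def intro!: continuous_intros)
  from abs_le_maxnorm[OF this 0] show ?case by simp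
next
  case (Suc k)
  have "\<bar>iter_map f (phi_it f k) t - iter_map f \<psi> t\<bar> \<le> q * (q ^ k * maxnorm (\<lambda>t. phi_it f 0 t - \<psi> t))"
    by (rule iter_map_contraction[OF admissible_phi_it \<psi> Suc.prems Suc.IH])
  then show ?case using fixed[OF Suc.prems] by (simp only: phi_it_Suc_eq_iter_map power_Suc mult.assoc)
qed

lemma phi_it_error:
  assumes \<psi>: "admissible M \<psi>" and fixed: "\<And>t. t \<in> {0..1} \<Longrightarrow> iter_map f \<psi> t = \<psi> t"
    and t: "t \<in> {0..1}"
  shows "\<bar>phi_it f k t - \<psi> t\<bar> \<le> error_bound k"
proof -
  define D where "D = maxnorm (\<lambda>t. phi_it f 0 t - \<psi> t)"
  define N where "N = maxnorm (\<lambda>t. phi_it f 1 t - phi_it f 0 t)"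
  have "D \<le> N + q * D"
    unfolding D_def
  proof (rule maxnorm_le)
    fix s :: real
    assume s: "s \<in> {0..1}"
    have "continuous_on {0..1} (\<lambda>t. phi_it f 1 t - phi_it f 0 t)"
      using admissible_phi_it[of 0] admissible_phi_it[of 1] by (auto simp: admissible_def intro!: continuous_intros)
    from abs_le_maxnorm[OF this s] have "\<bar>phi_it f 1 s - phi_it f 0 s\<bar> \<le> N" by (simp add: N_def)
    moreover have "\<bar>phi_it f 1 s - \<psi> s\<bar> \<le> q * D"
      using phi_it_geometric_error[OF \<psi> fixed s, of 1] by (simp add: D_def)
    ultimately show "\<bar>phi_it f 0 s - \<psi> s\<bar> \<le> N + q * maxnorm (\<lambda>t. phi_it f 0 t - \<psi> t)"
      by (simp add: D_def)
  qed
  then have "D \<le> N / (1 - q)" using q_lt_1 by (simp add: field_simps)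
  then have "q ^ k * D \<le> q ^ k * (N / (1 - q))"
    by (rule mult_left_mono[OF _ zero_le_power[OF q_nonneg]])
  then have "q ^ k * D \<le> error_bound k" by (simp add: N_def del: phi_it.simps)
  with phi_it_geometric_error[OF \<psi> fixed t, of k] show ?thesis by (simp add: D_def)
qed

lemma intG_phi_it_error:
  assumes \<psi>: "admissible M \<psi>" and fixed: "\<And>t. t \<in> {0..1} \<Longrightarrow> iter_map f \<psi> t = \<psi> t"
    and t: "t \<in> {0..1}"
  shows "\<bar>intG G0 (phi_it f k) t - intG G0 \<psi> t\<bar> \<le> M0 * error_bound k"
    and "\<bar>intG G1 (phi_it f k) t - intG G1 \<psi> t\<bar> \<le> M1 * error_bound k"
    and "\<bar>intG G2 (phi_it f k) t - intG G2 \<psi> t\<bar> \<le> M2 * error_bound k"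
proof -
  have c: "continuous_on {0..1} (phi_it f k)" "continuous_on {0..1} \<psi>"
    using admissible_phi_it \<psi> by (auto simp: admissible_def)
  then have cd: "continuous_on {0..1} (\<lambda>s. phi_it f k s - \<psi> s)" by (intro continuous_intros)
  note err = phi_it_error[OF \<psi> fixed]
  show "\<bar>intG G0 (phi_it f k) t - intG G0 \<psi> t\<bar> \<le> M0 * error_bound k"
    unfolding intG_kernels_diff[OF c t] by (rule abs_intG_G0_le[OF cd t err])
  show "\<bar>intG G1 (phi_it f k) t - intG G1 \<psi> t\<bar> \<le> M1 * error_bound k"
    unfolding intG_kernels_diff[OF c t] by (rule abs_intG_G1_le[OF cd t err])
  show "\<bar>intG G2 (phi_it f k) t - intG G2 \<psi> t\<bar> \<le> M2 * error_bound k"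
    unfolding intG_kernels_diff[OF c t] by (rule abs_intG_G2_le[OF cd t err])
qed

lemma bvp_solution_error:
  fixes u u1 u2 :: "real \<Rightarrow> real"
  assumes u_d1: "\<And>t. t \<in> {0..1} \<Longrightarrow> (u has_real_derivative u1 t) (at t within {0..1})"
    and u_d2: "\<And>t. t \<in> {0..1} \<Longrightarrow> (u1 has_real_derivative u2 t) (at t within {0..1})"
    and u2_cont: "continuous_on {0..1} u2"
    and u_d3: "\<And>t. t \<in> {0<..<1} \<Longrightarrow> (u2 has_real_derivative f t (u t) (u1 t) (u2 t)) (at t)"
    and u_bc: "u 0 = 0" "u1 0 = 0" "u1 1 = 0"
    and u_bounds: "\<And>t. t \<in> {0..1} \<Longrightarrow> \<bar>u t\<bar> \<le> M0 * M \<and> \<bar>u1 t\<bar> \<le> M1 * M \<and> \<bar>u2 t\<bar> \<le> M2 * M"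
    and t: "t \<in> {0..1}"
  shows "\<bar>intG G0 (phi_it f k) t - u t\<bar> \<le> M0 * error_bound k
      \<and> \<bar>intG G1 (phi_it f k) t - u1 t\<bar> \<le> M1 * error_bound k
      \<and> \<bar>intG G2 (phi_it f k) t - u2 t\<bar> \<le> M2 * error_bound k"
proof -
  define \<psi> where "\<psi> t = f t (u t) (u1 t) (u2 t)" for t
  have \<psi>: "admissible M \<psi>"
    unfolding \<psi>_def
    by (rule admissible_f_comp[OF continuous_on_derivative_within[OF u_d1]
          continuous_on_derivative_within[OF u_d2] u2_cont])
      (use u_bounds in \<open>auto simp: DM_def\<close>)
  have repr: "u s = intG G0 \<psi> s \<and> u1 s = intG G1 \<psi> s \<and> u2 s = intG G2 \<psi> s" if "s \<in> {0..1}" for s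
    by (rule green_representation[OF _ u_d1 u_d2 u2_cont _ u_bc that])
      (use \<psi> u_d3 in \<open>auto simp: admissible_def \<psi>_def\<close>)
  have fixed: "iter_map f \<psi> s = \<psi> s" if "s \<in> {0..1}" for s
    using repr[OF that] by (simp add: iter_map_def \<psi>_def)
  show ?thesis
    using intG_phi_it_error[OF \<psi> fixed t] repr[OF t] by simp
qed

lemma error_bound_tendsto_0: "(\<lambda>k. error_bound k) \<longlonglongrightarrow> 0"
  using q_nonneg q_lt_1
  by (intro tendsto_mult_left_zero tendsto_divide_zero LIMSEQ_power_zero) simp

end

theorem theorem3:
  fixes f :: "real \<Rightarrow> real \<Rightarrow> real \<Rightarrow> real \<Rightarrow> real"
    and M L0 L1 L2 :: real
    and u u1 u2 :: "real \<Rightarrow> real"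
  assumes M_pos: "M > 0"
    and f_cont: "continuous_on (DM M) (\<lambda>(t, x, y, z). f t x y z)"
    and L_nonneg: "L0 \<ge> 0" "L1 \<ge> 0" "L2 \<ge> 0"
    and f_bound: "\<And>t x y z. (t, x, y, z) \<in> DM M \<Longrightarrow> \<bar>f t x y z\<bar> \<le> M"
    and f_lip: "\<And>t x1 y1 z1 x2 y2 z2. (t, x1, y1, z1) \<in> DM M \<Longrightarrow> (t, x2, y2, z2) \<in> DM M \<Longrightarrow>
        \<bar>f t x2 y2 z2 - f t x1 y1 z1\<bar> \<le> L0 * \<bar>x2 - x1\<bar> + L1 * \<bar>y2 - y1\<bar> + L2 * \<bar>z2 - z1\<bar>"
    and q_lt: "L0 * M0 + L1 * M1 + L2 * M2 < 1"
    \<comment> \<open>u is a solution of the BVP, with u' = u1, u'' = u2 on [0,1]\<close>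
    and u_d1: "\<And>t. t \<in> {0..1} \<Longrightarrow> (u has_real_derivative u1 t) (at t within {0..1})"
    and u_d2: "\<And>t. t \<in> {0..1} \<Longrightarrow> (u1 has_real_derivative u2 t) (at t within {0..1})"
    and u2_cont: "continuous_on {0..1} u2"
    and u_d3: "\<And>t. t \<in> {0<..<1} \<Longrightarrow> (u2 has_real_derivative f t (u t) (u1 t) (u2 t)) (at t)"
    and u_bc: "u 0 = 0" "u1 0 = 0" "u1 1 = 0"
    and u_bounds: "\<And>t. t \<in> {0..1} \<Longrightarrow> \<bar>u t\<bar> \<le> M0 * M \<and> \<bar>u1 t\<bar> \<le> M1 * M \<and> \<bar>u2 t\<bar> \<le> M2 * M"
  shows
    "let q = L0 * M0 + L1 * M1 + L2 * M2;
         uk = (\<lambda>k. intG G0 (phi_it f k));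
         yk = (\<lambda>k. intG G1 (phi_it f k));
         zk = (\<lambda>k. intG G2 (phi_it f k));
         p = (\<lambda>k. q ^ k / (1 - q) * maxnorm (\<lambda>t. phi_it f 1 t - phi_it f 0 t))
     in (\<forall>k. \<forall>t\<in>{0..1}. (uk k has_real_derivative yk k t) (at t within {0..1})
                       \<and> (yk k has_real_derivative zk k t) (at t within {0..1}))
      \<and> uniform_limit {0..1} uk u sequentially
      \<and> uniform_limit {0..1} yk u1 sequentially
      \<and> uniform_limit {0..1} zk u2 sequentially
      \<and> (\<forall>k. \<forall>t\<in>{0..1}. \<bar>uk k t - u t\<bar> \<le> M0 * p k
                       \<and> \<bar>yk k t - u1 t\<bar> \<le> M1 * p k
                       \<and> \<bar>zk k t - u2 t\<bar> \<le> M2 * p k)"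
proof -
  interpret green_iteration f M L0 L1 L2
    using M_pos f_cont L_nonneg f_bound f_lip q_lt by unfold_locales auto
  note err = bvp_solution_error[OF u_d1 u_d2 u2_cont u_d3 u_bc u_bounds]
  have unif: "uniform_limit {0..1} (\<lambda>k. intG G (phi_it f k)) v sequentially"
    if "\<And>k t. t \<in> {0..1} \<Longrightarrow> \<bar>intG G (phi_it f k) t - v t\<bar> \<le> C * error_bound k" for G v C
    by (rule uniform_limit_if_dist_le[OF _ tendsto_mult_right_zero[OF error_bound_tendsto_0]])
      (use that in \<open>simp add: dist_real_def\<close>)
  have "continuous_on {0..1} (phi_it f k)" for k
    using admissible_phi_it by (simp add: admissible_def)
  then have "\<forall>k. \<forall>t\<in>{0..1}. (intG G0 (phi_it f k) has_real_derivative intG G1 (phi_it f k) t) (at t within {0..1})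
      \<and> (intG G1 (phi_it f k) has_real_derivative intG G2 (phi_it f k) t) (at t within {0..1})"
    using intG_G0_has_derivative intG_G1_has_derivative by blast
  moreover have "uniform_limit {0..1} (\<lambda>k. intG G0 (phi_it f k)) u sequentially"
    "uniform_limit {0..1} (\<lambda>k. intG G1 (phi_it f k)) u1 sequentially"
    "uniform_limit {0..1} (\<lambda>k. intG G2 (phi_it f k)) u2 sequentially"
    using err by (blast intro: unif)+
  ultimately show ?thesis
    unfolding Let_def using err by blast
qed

end
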